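(* Consider the uncensored delayed-feedback bandit model (described in the context), with conversion rates $\theta=(\theta_1,\dots,\theta_K)\in(0,1)^K$ such that arm $1$ is the unique optimal arm ($\theta^*:=\theta_1>\theta_k$ for all $k\neq1$), and with a delay distribution having finite expectation $\mu=\mathbb{E}[D]<\infty$. Then every uniformly efficient algorithm satisfies \[ \liminf_{T\to\infty}\frac{L(T)}{\log T}\;\ge\;\sum_{k\neq 1}\frac{\theta^*-\theta_k}{d(\theta_k,\theta^* )} . \]
   Context: Delayed-feedback bandit model: there are $K$ arms with unknown conversion rates $\theta_1,\dots,\theta_K\in[0,1]$, and a known delay distribution on $\mathbb{N}=\{0,1,2,\dots\}$ with CDF $\tau_d=\mathbb{P}(D\le d)$. At each round $t=1,2,\dots$ the learner chooses an arm $A_t\in\{1,\dots,K\}$ as a function of the observations available before round $t$. This triggers $C_t\in\{0,1\}$ and $D_t\in\mathbb{N}$ which, conditionally on the past, are independent, with $C_t\sim\mathrm{Bernoulli}(\theta_{A_t})$ and $D_t$ distributed with CDF $\tau$. For $s\le t$ let $X_{s,t}=C_s\mathbf{1}\{D_s\le t-s\}$. In the uncensored model, at round $t$ the learner observes all $X_{s,t}$, $1\le s\le t$, and receives reward $Y_t=\sum_{s=1}^{t}C_s\mathbf{1}\{D_s=t-s\}$. The expected regret is $L(T)=\mathbb{E}[r^*(T)-r(T)]$ where $r(T)=\sum_{t=1}^TY_t$ and $r^*(T)$ is the cumulated reward of an oracle playing the optimal arm at every round. An algorithm is uniformly efficient if for every bandit model and every $\alpha\in(0,1)$, $L(T)/T^\alpha\to0$.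 $d(p,q)=p\log(p/q)+(1-p)\log((1-p)/(1-q))$ is the Bernoulli Kullback–Leibler divergence. *)

theory Defs
  imports "HOL-Probability.Probability"
begin

text \<open>Rounds are indexed t = 1,2,...; arms are 1..K.
  A record of round s is the triple (A_s, C_s, D_s).
  A (deterministic) policy receives the current round t, the past arms
  (s \<mapsto> A_s for 1 \<le> s < t, 0 elsewhere) and all observations available
  before round t, i.e. X_{s,t'} for 1 \<le> s \<le> t' \<le> t-1 (False elsewhere),
  and returns the arm A_t.\<close>

type_synonym policy = "nat \<Rightarrow> (nat \<Rightarrow> nat) \<Rightarrow> (nat \<Rightarrow> nat \<Rightarrow> bool) \<Rightarrow> nat"

type_synonym history = "(nat \<times> bool \<times> nat) list"

definition past_arms :: "history \<Rightarrow> nat \<Rightarrow> nat" where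
  "past_arms h s = (if 1 \<le> s \<and> s \<le> length h then fst (h ! (s - 1)) else 0)"

definition past_obs :: "history \<Rightarrow> nat \<Rightarrow> nat \<Rightarrow> bool" where
  "past_obs h s t' = (if 1 \<le> s \<and> s \<le> t' \<and> t' \<le> length h
      then (fst (snd (h ! (s - 1))) \<and> snd (snd (h ! (s - 1))) \<le> t' - s) else False)"

primrec hist :: "policy \<Rightarrow> (nat \<Rightarrow> real) \<Rightarrow> nat pmf \<Rightarrow> nat \<Rightarrow> history pmf" where
  "hist \<pi> \<theta> \<delta> 0 = return_pmf []"
| "hist \<pi> \<theta> \<delta> (Suc n) =
     bind_pmf (hist \<pi> \<theta> \<delta> n) (\<lambda>h.
       let a = \<pi> (Suc n) (past_arms h) (past_obs h) in
       bind_pmf (bernoulli_pmf (\<theta> a)) (\<lambda>c.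
       bind_pmf \<delta> (\<lambda>d. return_pmf (h @ [(a, c, d)]))))"

definition round_reward :: "history \<Rightarrow> nat \<Rightarrow> real" where
  "round_reward h t = (\<Sum>s=1..t. if fst (snd (h ! (s - 1))) \<and> snd (snd (h ! (s - 1))) = t - s
                                  then 1 else 0)"

definition cum_reward :: "history \<Rightarrow> nat \<Rightarrow> real" where
  "cum_reward h T = (\<Sum>t=1..T. round_reward h t)"

definition exp_reward :: "policy \<Rightarrow> (nat \<Rightarrow> real) \<Rightarrow> nat pmf \<Rightarrow> nat \<Rightarrow> real" where
  "exp_reward \<pi> \<theta> \<delta> T = measure_pmf.expectation (hist \<pi> \<theta> \<delta> T) (\<lambda>h. cum_reward h T)"

definition const_policy :: "nat \<Rightarrow> policy" where
  "const_policy k = (\<lambda>_ _ _. k)"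

text \<open>Expected regret L(T) = E[r*(T)] - E[r(T)], where the oracle plays an optimal
  arm at every round (its expected reward is the maximum over the constant policies).\<close>
definition regret :: "nat \<Rightarrow> policy \<Rightarrow> (nat \<Rightarrow> real) \<Rightarrow> nat pmf \<Rightarrow> nat \<Rightarrow> real" where
  "regret K \<pi> \<theta> \<delta> T =
     (MAX k \<in> {1..K}. exp_reward (const_policy k) \<theta> \<delta> T) - exp_reward \<pi> \<theta> \<delta> T"

definition valid_policy :: "nat \<Rightarrow> policy \<Rightarrow> bool" where
  "valid_policy K \<pi> \<longleftrightarrow> (\<forall>t as xs. \<pi> t as xs \<in> {1..K})"

definition uniformly_efficient :: "nat \<Rightarrow> nat pmf \<Rightarrow> policy \<Rightarrow> bool" where
  "uniformly_efficient K \<delta> \<pi> \<longleftrightarrow>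
     (\<forall>\<theta>. (\<forall>k\<in>{1..K}. 0 \<le> \<theta> k \<and> \<theta> k \<le> 1) \<longrightarrow>
       (\<forall>\<alpha>::real. 0 < \<alpha> \<and> \<alpha> < 1 \<longrightarrow>
          ((\<lambda>T. regret K \<pi> \<theta> \<delta> T / real T powr \<alpha>) \<longlonglongrightarrow> 0)))"

definition kl_bern :: "real \<Rightarrow> real \<Rightarrow> real" where
  "kl_bern p q = p * ln (p / q) + (1 - p) * ln ((1 - p) / (1 - q))"

end

theory Submission
  imports Defs "HOL-Real_Asymp.Real_Asymp"
begin

text \<open>Lai--Robbins change of measure. Raising the conversion rate of a suboptimal arm k to some
  x > \<theta> 1 yields a bandit in which k is the unique best arm. By uniform efficiency, under \<theta> the
  arm k is pulled at most T / 2 times with probability tending to 1, while under the modified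
  rates this event has probability at most T powr (\<alpha> - 1). A Donsker--Varadhan inequality for
  the laws of the histories, whose log-likelihood ratio has expectation
  kl(\<theta> k, x) E[N_k(T)] because the delays carry no information about the rates, then forces
  kl(\<theta> k, x) E[N_k(T)] \<ge> (1 - \<alpha>)^2 ln T - ln 2. The regret is at least
  the sum over k of (\<theta> 1 - \<theta> k) E[N_k(T)] minus the conversions still in transit at T, whose expected
  number is at most E[D]; letting x \<rightarrow> \<theta> 1 and \<alpha> \<rightarrow> 0 gives the bound.\<close>

section \<open>Expectations over probability mass functions\<close>

lemma integrable_measure_pmf_bounded:
  fixes f :: "'a \<Rightarrow> real"
  assumes "\<And>x. x \<in> set_pmf p \<Longrightarrow> \<bar>f x\<bar> \<le> B"
  shows "integrable (measure_pmf p) f"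
  by (rule measure_pmf.integrable_const_bound[where B=B]) (use assms in \<open>auto simp: AE_measure_pmf_iff\<close>)

lemma abs_sum_lessThan_le:
  fixes g :: "nat \<Rightarrow> real"
  assumes "\<And>s. s < n \<Longrightarrow> \<bar>g s\<bar> \<le> B"
  shows "\<bar>\<Sum>s<n. g s\<bar> \<le> real n * B"
  using order_trans[OF sum_abs sum_bounded_above[of "{..<n}" "\<lambda>s. \<bar>g s\<bar>" B]] assms by simp

lemma abs_sum_list_le:
  fixes f :: "'a \<Rightarrow> real"
  assumes "\<And>x. x \<in> set xs \<Longrightarrow> \<bar>f x\<bar> \<le> B"
  shows "\<bar>\<Sum>x\<leftarrow>xs. f x\<bar> \<le> real (length xs) * B"
  using assms by (induction xs) (auto simp: algebra_simps intro: order_trans[OF abs_triangle_ineq add_mono])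

lemma integral_bind_pmf_bounded:
  fixes f :: "'b \<Rightarrow> real"
  assumes bounded: "\<And>y. y \<in> set_pmf (bind_pmf M N) \<Longrightarrow> \<bar>f y\<bar> \<le> B"
  shows "measure_pmf.expectation (bind_pmf M N) f
       = measure_pmf.expectation M (\<lambda>x. measure_pmf.expectation (N x) f)"
proof -
  define g where "g y = (if y \<in> set_pmf (bind_pmf M N) then f y else 0)" for y
  have g_bounded: "\<bar>g y\<bar> \<le> max B 0" for y
    using bounded by (auto simp: g_def intro: order_trans[OF _ max.cobounded1])
  have "measure_pmf.expectation (bind_pmf M N) f = measure_pmf.expectation (bind_pmf M N) g"
    by (intro integral_cong_AE) (auto simp: g_def AE_measure_pmf_iff)
  also have "\<dots> = measure_pmf.expectation M (\<lambda>x. measure_pmf.expectation (N x) g)"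
    unfolding measure_pmf_bind
    by (rule integral_bind[where K="count_space UNIV" and B="max B 0" and B'=1])
       (use g_bounded measurable_measure_pmf[of N] in
         \<open>auto simp: measure_pmf.emeasure_space_1 prob_space_imp_subprob_space
                     measure_pmf.prob_space_axioms intro: measure_pmf.finite_measure_axioms\<close>)
  also have "\<dots> = measure_pmf.expectation M (\<lambda>x. measure_pmf.expectation (N x) f)"
    by (intro integral_cong_AE) (auto simp: g_def AE_measure_pmf_iff set_bind_pmf intro!: integral_cong_AE)
  finally show ?thesis .
qed

lemma abs_integral_measure_pmf_le:
  fixes f :: "'a \<Rightarrow> real"
  assumes "\<And>x. x \<in> set_pmf p \<Longrightarrow> \<bar>f x\<bar> \<le> B"
  shows "\<bar>measure_pmf.expectation p f\<bar> \<le> B"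
proof -
  have "integrable (measure_pmf p) f"
    using assms by (rule integrable_measure_pmf_bounded)
  then have "- B \<le> measure_pmf.expectation p f" "measure_pmf.expectation p f \<le> B"
    using assms by (auto intro!: measure_pmf.integral_ge_const measure_pmf.integral_le_const
        simp: AE_measure_pmf_iff abs_le_iff minus_le_iff)
  then show ?thesis by simp
qed

lemma exp_integral_le_integral_exp:
  fixes f :: "'a \<Rightarrow> real"
  assumes "\<And>x. \<bar>f x\<bar> \<le> B"
  shows "exp (measure_pmf.expectation p f) \<le> measure_pmf.expectation p (\<lambda>x. exp (f x))"
proof (rule measure_pmf.jensens_inequality[where I=UNIV])
  show "integrable (measure_pmf p) f"
    using assms by (intro integrable_measure_pmf_bounded)
  show "integrable (measure_pmf p) (\<lambda>x. exp (f x))"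
    using assms by (intro integrable_measure_pmf_bounded[where B="exp B"]) (auto dest: abs_le_D1)
qed (auto simp: exp_convex)

lemma integral_exp_pos:
  fixes f :: "'a \<Rightarrow> real"
  assumes "\<And>x. \<bar>f x\<bar> \<le> B"
  shows "0 < measure_pmf.expectation p (\<lambda>x. exp (f x))"
  using assms by (rule less_le_trans[OF exp_gt_zero exp_integral_le_integral_exp])

lemma abs_ln_integral_exp_le:
  fixes f :: "'a \<Rightarrow> real"
  assumes bounded: "\<And>x. \<bar>f x\<bar> \<le> B"
  shows "\<bar>ln (measure_pmf.expectation p (\<lambda>x. exp (f x)))\<bar> \<le> B"
proof -
  have "- B \<le> measure_pmf.expectation p f"
    using abs_integral_measure_pmf_le[of p f B] bounded by simp
  also have "\<dots> \<le> ln (measure_pmf.expectation p (\<lambda>x. exp (f x)))"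
    using exp_integral_le_integral_exp[where f=f and p=p, OF bounded]
      integral_exp_pos[where f=f and p=p, OF bounded] by (simp add: ln_ge_iff)
  finally have "- B \<le> ln (measure_pmf.expectation p (\<lambda>x. exp (f x)))" .
  moreover have "measure_pmf.expectation p (\<lambda>x. exp (f x)) \<le> exp B"
    using bounded
    by (intro measure_pmf.integral_le_const integrable_measure_pmf_bounded[where B="exp B"])
       (auto simp: abs_le_iff)
  then have "ln (measure_pmf.expectation p (\<lambda>x. exp (f x))) \<le> B"
    using ln_mono integral_exp_pos[where f=f and p=p, OF bounded] by fastforce
  ultimately show ?thesis
    by (simp add: abs_le_iff minus_le_iff)
qed

section \<open>Bernoulli Kullback--Leibler divergence\<close>

lemma kl_bern_self [simp]: "kl_bern p p = 0"
  by (cases "p = 0"; cases "p = 1") (simp_all add: kl_bern_def)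

lemma kl_bern_pos:
  assumes "0 < p" "p < 1" "0 < q" "q < 1" "p \<noteq> q"
  shows "0 < kl_bern p q"
proof -
  have "ln q - ln p < (q - p) / p"
    using assms by (intro ln_diff_less) auto
  moreover have "ln (1 - q) - ln (1 - p) \<le> ((1 - q) - (1 - p)) / (1 - p)"
    using assms by (intro ln_diff_le) auto
  ultimately have "p * (ln q - ln p) + (1 - p) * (ln (1 - q) - ln (1 - p))
      < p * ((q - p) / p) + (1 - p) * (((1 - q) - (1 - p)) / (1 - p))"
    using assms by (intro add_less_le_mono mult_strict_left_mono mult_left_mono) auto
  also have "\<dots> = 0"
    using assms by (simp add: field_simps)
  finally show ?thesis
    using assms by (simp add: kl_bern_def ln_div algebra_simps)
qed

lemma isCont_kl_bern:
  assumes "0 < p" "p < 1" "0 < q" "q < 1"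
  shows "isCont (kl_bern p) q"
  unfolding kl_bern_def using assms by (intro continuous_intros) auto

text \<open>The two-point Donsker--Varadhan inequality: the concavity of ln, applied to
  the weights p, 1 - p and the points q u / p, (1 - q) v / (1 - p).\<close>
lemma kl_bern_variational:
  assumes "0 < p" "p < 1" "0 < q" "q < 1" "0 < u" "0 < v"
  shows "p * ln u + (1 - p) * ln v - kl_bern p q \<le> ln (q * u + (1 - q) * v)"
proof -
  have "ln ((1 - q) * v / (1 - p)) = ln (1 - q) + ln v - ln (1 - p)"
    and "ln (q * u / p) = ln q + ln u - ln p"
    using assms by (simp_all add: ln_div ln_mult)
  then have "p * ln u + (1 - p) * ln v - kl_bern p q
      = (1 - p) * ln ((1 - q) * v / (1 - p)) + p * ln (q * u / p)"
    using assms by (simp add: kl_bern_def ln_div algebra_simps)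
  also have "\<dots> \<le> ln ((1 - p) *\<^sub>R ((1 - q) * v / (1 - p)) + p *\<^sub>R (q * u / p))"
    using assms by (intro concave_onD[OF ln_concave]) auto
  also have "(1 - p) *\<^sub>R ((1 - q) * v / (1 - p)) + p *\<^sub>R (q * u / p) = q * u + (1 - q) * v"
    using assms by simp
  finally show ?thesis .
qed

section \<open>Histories of the bandit\<close>

definition next_arm :: "policy \<Rightarrow> nat \<Rightarrow> history \<Rightarrow> nat" where
  "next_arm \<pi> n h = \<pi> (Suc n) (past_arms h) (past_obs h)"

definition round_pmf :: "(nat \<Rightarrow> real) \<Rightarrow> nat pmf \<Rightarrow> nat \<Rightarrow> (nat \<times> bool \<times> nat) pmf" where
  "round_pmf \<theta> \<delta> a = bind_pmf (bernoulli_pmf (\<theta> a)) (\<lambda>c. map_pmf (\<lambda>d. (a, c, d)) \<delta>)"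

lemma hist_Suc_round:
  "hist \<pi> \<theta> \<delta> (Suc n)
     = bind_pmf (hist \<pi> \<theta> \<delta> n) (\<lambda>h. map_pmf (\<lambda>x. h @ [x]) (round_pmf \<theta> \<delta> (next_arm \<pi> n h)))"
  by (simp add: round_pmf_def next_arm_def Let_def map_pmf_def bind_assoc_pmf bind_return_pmf)

declare hist.simps(2) [simp del]

lemma fst_set_pmf_round_pmf: "x \<in> set_pmf (round_pmf \<theta> \<delta> a) \<Longrightarrow> fst x = a"
  by (auto simp: round_pmf_def)

lemma integral_round_pmf_fst:
  fixes g :: "nat \<Rightarrow> real"
  shows "measure_pmf.expectation (round_pmf \<theta> \<delta> a) (\<lambda>x. g (fst x)) = g a"
  by (subst integral_cong_AE[where g="\<lambda>_. g a"]) (auto simp: AE_measure_pmf_iff dest: fst_set_pmf_round_pmf)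

lemma length_hist: "h \<in> set_pmf (hist \<pi> \<theta> \<delta> n) \<Longrightarrow> length h = n"
  by (induction n arbitrary: h) (auto simp: hist_Suc_round set_bind_pmf)

lemma arm_hist:
  assumes "\<And>t as xs. \<pi> t as xs \<in> A"
  shows "h \<in> set_pmf (hist \<pi> \<theta> \<delta> n) \<Longrightarrow> x \<in> set h \<Longrightarrow> fst x \<in> A"
  using assms by (induction n arbitrary: h)
    (fastforce simp: hist_Suc_round next_arm_def set_bind_pmf dest: fst_set_pmf_round_pmf)+

lemma arm_hist_valid:
  "valid_policy K \<pi> \<Longrightarrow> h \<in> set_pmf (hist \<pi> \<theta> \<delta> n) \<Longrightarrow> x \<in> set h \<Longrightarrow> fst x \<in> {1..K}"
  by (rule arm_hist) (auto simp: valid_policy_def)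

lemma integral_hist_Suc:
  fixes F :: "history \<Rightarrow> real"
  assumes "\<And>h. h \<in> set_pmf (hist \<pi> \<theta> \<delta> (Suc n)) \<Longrightarrow> \<bar>F h\<bar> \<le> B"
  shows "measure_pmf.expectation (hist \<pi> \<theta> \<delta> (Suc n)) F
       = measure_pmf.expectation (hist \<pi> \<theta> \<delta> n)
           (\<lambda>h. measure_pmf.expectation (round_pmf \<theta> \<delta> (next_arm \<pi> n h)) (\<lambda>x. F (h @ [x])))"
  using assms unfolding hist_Suc_round by (subst integral_bind_pmf_bounded) auto

lemma integral_round_pmf:
  fixes g :: "nat \<times> bool \<times> nat \<Rightarrow> real"
  assumes "0 \<le> \<theta> a" "\<theta> a \<le> 1" and "\<And>x. \<bar>g x\<bar> \<le> B"
  shows "measure_pmf.expectation (round_pmf \<theta> \<delta> a) g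
       = \<theta> a * measure_pmf.expectation \<delta> (\<lambda>d. g (a, True, d))
         + (1 - \<theta> a) * measure_pmf.expectation \<delta> (\<lambda>d. g (a, False, d))"
  unfolding round_pmf_def using assms by (subst integral_bind_pmf_bounded) (auto simp: mult.commute)

section \<open>Change of measure\<close>

lemma round_change_of_measure:
  fixes g :: "nat \<times> bool \<times> nat \<Rightarrow> real"
  assumes "0 < \<theta> a" "\<theta> a < 1" "0 < \<theta>' a" "\<theta>' a < 1" and bounded: "\<And>x. \<bar>g x\<bar> \<le> B"
  shows "measure_pmf.expectation (round_pmf \<theta> \<delta> a) g - kl_bern (\<theta> a) (\<theta>' a)
           \<le> ln (measure_pmf.expectation (round_pmf \<theta>' \<delta> a) (\<lambda>x. exp (g x)))"
proof -
  define u where "u c = measure_pmf.expectation \<delta> (\<lambda>d. g (a, c, d))" for c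
  define v where "v c = measure_pmf.expectation \<delta> (\<lambda>d. exp (g (a, c, d)))" for c
  have exp_u: "exp (u c) \<le> v c" for c
    unfolding u_def v_def using bounded by (rule exp_integral_le_integral_exp)
  then have v_pos: "0 < v c" for c
    by (rule less_le_trans[OF exp_gt_zero])
  have u_le: "u c \<le> ln (v c)" for c
    using exp_u[of c] v_pos[of c] by (simp add: ln_ge_iff)
  have exp_bounded: "\<bar>exp (g x)\<bar> \<le> exp B" for x
    using bounded[of x] by (simp add: abs_le_iff)
  have "measure_pmf.expectation (round_pmf \<theta> \<delta> a) g - kl_bern (\<theta> a) (\<theta>' a)
      = \<theta> a * u True + (1 - \<theta> a) * u False - kl_bern (\<theta> a) (\<theta>' a)"
    using assms by (simp add: integral_round_pmf[where B=B] u_def)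
  also have "\<dots> \<le> \<theta> a * ln (v True) + (1 - \<theta> a) * ln (v False) - kl_bern (\<theta> a) (\<theta>' a)"
    using assms u_le by (intro diff_right_mono add_mono mult_left_mono) auto
  also have "\<dots> \<le> ln (\<theta>' a * v True + (1 - \<theta>' a) * v False)"
    using assms v_pos by (intro kl_bern_variational) auto
  also have "\<dots> = ln (measure_pmf.expectation (round_pmf \<theta>' \<delta> a) (\<lambda>x. exp (g x)))"
    using assms exp_bounded by (simp add: integral_round_pmf[where B="exp B"] v_def)
  finally show ?thesis .
qed

text \<open>The conditional expectation, given the arms pulled, of the log-likelihood ratio of \<theta>
  against \<theta>'; the delays do not enter since their law does not depend on the rates.\<close>
definition kl_cost :: "(nat \<Rightarrow> real) \<Rightarrow> (nat \<Rightarrow> real) \<Rightarrow> history \<Rightarrow> real" where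
  "kl_cost \<theta> \<theta>' h = (\<Sum>x\<leftarrow>h. kl_bern (\<theta> (fst x)) (\<theta>' (fst x)))"

lemma abs_kl_cost_hist_le:
  assumes "valid_policy K \<pi>" and "h \<in> set_pmf (hist \<pi> \<theta> \<delta> n)"
  shows "\<bar>kl_cost \<theta> \<theta>' h\<bar> \<le> real n * (\<Sum>a\<in>{1..K}. \<bar>kl_bern (\<theta> a) (\<theta>' a)\<bar>)"
  unfolding kl_cost_def length_hist[OF assms(2), symmetric] using arm_hist_valid[OF assms]
  by (intro abs_sum_list_le member_le_sum[where f="\<lambda>a. \<bar>kl_bern (\<theta> a) (\<theta>' a)\<bar>"]) auto

lemma integrable_kl_cost_hist:
  "valid_policy K \<pi> \<Longrightarrow> integrable (measure_pmf (hist \<pi> \<theta> \<delta> n)) (kl_cost \<theta> \<theta>')"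
  by (rule integrable_measure_pmf_bounded) (rule abs_kl_cost_hist_le)

lemma integral_kl_cost_hist_Suc:
  assumes valid: "valid_policy K \<pi>"
  shows "measure_pmf.expectation (hist \<pi> \<theta> \<delta> (Suc n)) (kl_cost \<theta> \<theta>')
       = measure_pmf.expectation (hist \<pi> \<theta> \<delta> n)
           (\<lambda>h. kl_cost \<theta> \<theta>' h + kl_bern (\<theta> (next_arm \<pi> n h)) (\<theta>' (next_arm \<pi> n h)))"
proof -
  have "measure_pmf.expectation (round_pmf \<theta> \<delta> (next_arm \<pi> n h)) (\<lambda>x. kl_cost \<theta> \<theta>' (h @ [x]))
      = kl_cost \<theta> \<theta>' h + kl_bern (\<theta> (next_arm \<pi> n h)) (\<theta>' (next_arm \<pi> n h))" for h
    using integral_round_pmf_fst[where g="\<lambda>a. kl_cost \<theta> \<theta>' h + kl_bern (\<theta> a) (\<theta>' a)"]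
    by (simp add: kl_cost_def)
  moreover have bounded: "h \<in> set_pmf (hist \<pi> \<theta> \<delta> (Suc n)) \<Longrightarrow>
      \<bar>kl_cost \<theta> \<theta>' h\<bar> \<le> real (Suc n) * (\<Sum>a\<in>{1..K}. \<bar>kl_bern (\<theta> a) (\<theta>' a)\<bar>)" for h
    by (rule abs_kl_cost_hist_le[OF valid])
  ultimately show ?thesis
    by (simp add: integral_hist_Suc[OF bounded])
qed

lemma hist_change_of_measure:
  fixes f :: "history \<Rightarrow> real"
  assumes valid: "valid_policy K \<pi>"
    and \<theta>: "\<forall>a\<in>{1..K}. 0 < \<theta> a \<and> \<theta> a < 1" and \<theta>': "\<forall>a\<in>{1..K}. 0 < \<theta>' a \<and> \<theta>' a < 1"
    and bounded: "\<And>h. \<bar>f h\<bar> \<le> B"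
  shows "measure_pmf.expectation (hist \<pi> \<theta> \<delta> n) f - measure_pmf.expectation (hist \<pi> \<theta> \<delta> n) (kl_cost \<theta> \<theta>')
           \<le> ln (measure_pmf.expectation (hist \<pi> \<theta>' \<delta> n) (\<lambda>h. exp (f h)))"
  using bounded
proof (induction n arbitrary: f B)
  case 0
  then show ?case by (simp add: kl_cost_def)
next
  case (Suc n)
  let ?H = "hist \<pi> \<theta> \<delta> n" and ?H' = "hist \<pi> \<theta>' \<delta> n"
  let ?kl = "\<lambda>h. kl_bern (\<theta> (next_arm \<pi> n h)) (\<theta>' (next_arm \<pi> n h))"
  let ?F = "\<lambda>h. measure_pmf.expectation (round_pmf \<theta> \<delta> (next_arm \<pi> n h)) (\<lambda>x. f (h @ [x]))"
  let ?E = "\<lambda>h. measure_pmf.expectation (round_pmf \<theta>' \<delta> (next_arm \<pi> n h)) (\<lambda>x. exp (f (h @ [x])))"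
  define G where "G h = ln (?E h)" for h
  have arm: "next_arm \<pi> n h \<in> {1..K}" for h
    using valid by (simp add: valid_policy_def next_arm_def)
  have G_bounded: "\<bar>G h\<bar> \<le> B" for h
    unfolding G_def using Suc.prems by (rule abs_ln_integral_exp_le)
  have exp_G: "exp (G h) = ?E h" for h
    unfolding G_def using integral_exp_pos[where f="\<lambda>x. f (h @ [x])", OF Suc.prems] by simp
  have F_le: "?F h - ?kl h \<le> G h" for h
    unfolding G_def using \<theta> \<theta>' arm[of h] Suc.prems by (intro round_change_of_measure) auto
  have int_F: "integrable (measure_pmf ?H) ?F"
    using Suc.prems by (intro integrable_measure_pmf_bounded abs_integral_measure_pmf_le) auto
  have int_kl: "integrable (measure_pmf ?H) ?kl"
    using arm by (intro integrable_measure_pmf_bounded[where B="\<Sum>a\<in>{1..K}. \<bar>kl_bern (\<theta> a) (\<theta>' a)\<bar>"]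
        member_le_sum[where f="\<lambda>a. \<bar>kl_bern (\<theta> a) (\<theta>' a)\<bar>"]) auto
  have "measure_pmf.expectation (hist \<pi> \<theta> \<delta> (Suc n)) f = measure_pmf.expectation ?H ?F"
    by (rule integral_hist_Suc) (rule Suc.prems)
  then have "measure_pmf.expectation (hist \<pi> \<theta> \<delta> (Suc n)) f
      - measure_pmf.expectation (hist \<pi> \<theta> \<delta> (Suc n)) (kl_cost \<theta> \<theta>')
      = measure_pmf.expectation ?H (\<lambda>h. ?F h - ?kl h) - measure_pmf.expectation ?H (kl_cost \<theta> \<theta>')"
    using int_F int_kl integrable_kl_cost_hist[OF valid]
    by (simp add: integral_kl_cost_hist_Suc[OF valid])
  also have "\<dots> \<le> measure_pmf.expectation ?H G - measure_pmf.expectation ?H (kl_cost \<theta> \<theta>')"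
    using F_le Bochner_Integration.integrable_diff[OF int_F int_kl]
      integrable_measure_pmf_bounded[OF G_bounded]
    by (intro diff_right_mono integral_mono)
  also have "\<dots> \<le> ln (measure_pmf.expectation ?H' (\<lambda>h. exp (G h)))"
    using G_bounded by (rule Suc.IH)
  also have "\<dots> = ln (measure_pmf.expectation (hist \<pi> \<theta>' \<delta> (Suc n)) (\<lambda>h. exp (f h)))"
    using Suc.prems by (subst integral_hist_Suc[where B="exp B"]) (auto simp: exp_G abs_le_iff)
  finally show ?case .
qed

definition pulls :: "nat \<Rightarrow> history \<Rightarrow> real" where
  "pulls k h = real (length (filter (\<lambda>x. fst x = k) h))"

lemma kl_cost_fun_upd: "kl_cost \<theta> (\<theta>(k := q)) h = kl_bern (\<theta> k) q * pulls k h"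
  by (induction h) (auto simp: kl_cost_def pulls_def algebra_simps)

text \<open>Test function ln (1 / q) times the indicator of E in the change of measure.\<close>
lemma prob_change_of_measure:
  fixes E :: "history set"
  assumes valid: "valid_policy K \<pi>"
    and \<theta>: "\<forall>a\<in>{1..K}. 0 < \<theta> a \<and> \<theta> a < 1" and \<theta>': "\<forall>a\<in>{1..K}. 0 < \<theta>' a \<and> \<theta>' a < 1"
    and q: "0 < q" and rare: "measure_pmf.prob (hist \<pi> \<theta>' \<delta> n) E \<le> q"
  shows "measure_pmf.prob (hist \<pi> \<theta> \<delta> n) E * ln (1 / q) - ln 2
           \<le> measure_pmf.expectation (hist \<pi> \<theta> \<delta> n) (kl_cost \<theta> \<theta>')"
proof -
  define c where "c = ln (1 / q)"
  define Q where "Q = measure_pmf.prob (hist \<pi> \<theta>' \<delta> n) E"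
  have exp_test: "exp (c * indicator E h) = 1 + (1 / q - 1) * indicator E h" for h
    using q by (simp add: c_def indicator_def)
  have "\<bar>c * indicator E h\<bar> \<le> \<bar>c\<bar>" for h
    by (simp add: indicator_def)
  then have "measure_pmf.expectation (hist \<pi> \<theta> \<delta> n) (\<lambda>h. c * indicator E h)
      - measure_pmf.expectation (hist \<pi> \<theta> \<delta> n) (kl_cost \<theta> \<theta>')
      \<le> ln (measure_pmf.expectation (hist \<pi> \<theta>' \<delta> n) (\<lambda>h. exp (c * indicator E h)))"
    by (rule hist_change_of_measure[OF valid \<theta> \<theta>'])
  then have "measure_pmf.prob (hist \<pi> \<theta> \<delta> n) E * c
      - measure_pmf.expectation (hist \<pi> \<theta> \<delta> n) (kl_cost \<theta> \<theta>')
      \<le> ln (measure_pmf.expectation (hist \<pi> \<theta>' \<delta> n) (\<lambda>h. exp (c * indicator E h)))"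
    by (simp add: mult.commute)
  also have "measure_pmf.expectation (hist \<pi> \<theta>' \<delta> n) (\<lambda>h. exp (c * indicator E h)) = (1 - Q) + Q / q"
  proof -
    have "integrable (measure_pmf (hist \<pi> \<theta>' \<delta> n)) (\<lambda>h. (1 / q - 1) * indicator E h)"
      by (rule integrable_measure_pmf_bounded[where B="\<bar>1 / q - 1\<bar>"]) (simp add: indicator_def)
    then have "measure_pmf.expectation (hist \<pi> \<theta>' \<delta> n) (\<lambda>h. 1 + (1 / q - 1) * indicator E h)
        = 1 + (1 / q - 1) * Q"
      by (subst Bochner_Integration.integral_add) (auto simp: Q_def)
    then show ?thesis
      unfolding exp_test by (simp add: algebra_simps)
  qed
  also have "ln ((1 - Q) + Q / q) \<le> ln 2"
  proof (rule ln_mono)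
    have "0 \<le> Q" "Q \<le> 1" "Q \<le> q"
      using rare by (simp_all add: Q_def)
    moreover from this have "Q / q \<le> 1" "0 \<le> Q / q"
      using q by (simp_all add: divide_le_eq_1)
    moreover have "Q = 1 \<Longrightarrow> 0 < Q / q"
      using q by simp
    ultimately show "(1 - Q) + Q / q \<le> 2" "0 < (1 - Q) + Q / q"
      by linarith+
  qed
  finally show ?thesis
    unfolding c_def by simp
qed

section \<open>Rewards and regret\<close>

text \<open>The conversion of the round with list index s, i.e. of round s + 1, counts in r(T)
  iff it happens and arrives by round T.\<close>
definition counted_by :: "nat \<Rightarrow> nat \<Rightarrow> nat \<times> bool \<times> nat \<Rightarrow> real" where
  "counted_by T s x = (if fst (snd x) \<and> snd (snd x) \<le> T - Suc s then 1 else 0)"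

lemma cum_reward_eq_sum_counted_by: "cum_reward h T = (\<Sum>s<T. counted_by T s (h ! s))"
proof (induction T)
  case 0
  then show ?case by (simp add: cum_reward_def)
next
  case (Suc T)
  have "round_reward h (Suc T)
      = (\<Sum>s<Suc T. if fst (snd (h ! s)) \<and> snd (snd (h ! s)) = T - s then 1 else 0)"
    by (simp only: round_reward_def One_nat_def sum.atLeast1_atMost_eq) simp
  moreover have "counted_by (Suc T) s (h ! s) = counted_by T s (h ! s)
      + (if fst (snd (h ! s)) \<and> snd (snd (h ! s)) = T - s then 1 else 0)" if "s < T" for s
    using that by (auto simp: counted_by_def)
  ultimately show ?case
    using Suc.IH by (simp add: cum_reward_def sum.distrib counted_by_def)
qed

lemma integral_hist_sum_rounds:
  fixes \<phi> :: "nat \<Rightarrow> nat \<times> bool \<times> nat \<Rightarrow> real"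
  assumes bounded: "\<And>s x. \<bar>\<phi> s x\<bar> \<le> B"
  shows "measure_pmf.expectation (hist \<pi> \<theta> \<delta> n) (\<lambda>h. \<Sum>s<n. \<phi> s (h ! s))
       = measure_pmf.expectation (hist \<pi> \<theta> \<delta> n)
           (\<lambda>h. \<Sum>s<n. measure_pmf.expectation (round_pmf \<theta> \<delta> (fst (h ! s))) (\<phi> s))"
proof (induction n)
  case 0
  then show ?case by simp
next
  case (Suc n)
  let ?H = "hist \<pi> \<theta> \<delta> n"
  define \<psi> where "\<psi> s a = measure_pmf.expectation (round_pmf \<theta> \<delta> a) (\<phi> s)" for s a
  have \<psi>_bounded: "\<bar>\<psi> s a\<bar> \<le> B" for s a
    unfolding \<psi>_def using bounded by (rule abs_integral_measure_pmf_le)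
  have int_sum: "integrable (measure_pmf ?H) (\<lambda>h. \<Sum>s<n. g s h)" if "\<And>s h. \<bar>g s h\<bar> \<le> B" for g
    using that by (intro integrable_measure_pmf_bounded[where B="real n * B"] abs_sum_lessThan_le)
  have int_\<psi>: "integrable (measure_pmf ?H) (\<lambda>h. \<psi> n (next_arm \<pi> n h))"
    using \<psi>_bounded by (rule integrable_measure_pmf_bounded)
  have const_round: "measure_pmf.expectation (round_pmf \<theta> \<delta> (next_arm \<pi> n h)) (\<lambda>x. c + g x)
      = c + measure_pmf.expectation (round_pmf \<theta> \<delta> (next_arm \<pi> n h)) g" if "\<And>x. \<bar>g x\<bar> \<le> B" for h c g
    using integrable_measure_pmf_bounded[of _ g B] that by simp
  have "measure_pmf.expectation (hist \<pi> \<theta> \<delta> (Suc n)) (\<lambda>h. \<Sum>s<Suc n. \<phi> s (h ! s))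
      = measure_pmf.expectation ?H (\<lambda>h. (\<Sum>s<n. \<phi> s (h ! s)) + \<psi> n (next_arm \<pi> n h))"
  proof (subst integral_hist_Suc[where B="real (Suc n) * B"])
    show "measure_pmf.expectation ?H (\<lambda>h. measure_pmf.expectation (round_pmf \<theta> \<delta> (next_arm \<pi> n h))
          (\<lambda>x. \<Sum>s<Suc n. \<phi> s ((h @ [x]) ! s)))
        = measure_pmf.expectation ?H (\<lambda>h. (\<Sum>s<n. \<phi> s (h ! s)) + \<psi> n (next_arm \<pi> n h))"
      using bounded
      by (intro integral_cong_AE) (auto simp: AE_measure_pmf_iff length_hist nth_append \<psi>_def const_round)
  qed (intro abs_sum_lessThan_le bounded)
  also have "\<dots> = measure_pmf.expectation ?H (\<lambda>h. \<Sum>s<n. \<psi> s (fst (h ! s)))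
      + measure_pmf.expectation ?H (\<lambda>h. \<psi> n (next_arm \<pi> n h))"
    using Suc.IH int_sum[OF bounded] int_\<psi> by (simp add: \<psi>_def)
  also have "\<dots> = measure_pmf.expectation ?H (\<lambda>h. (\<Sum>s<n. \<psi> s (fst (h ! s))) + \<psi> n (next_arm \<pi> n h))"
    using int_sum[OF \<psi>_bounded] int_\<psi> by simp
  also have "\<dots> = measure_pmf.expectation (hist \<pi> \<theta> \<delta> (Suc n)) (\<lambda>h. \<Sum>s<Suc n. \<psi> s (fst (h ! s)))"
  proof (subst integral_hist_Suc[where B="real (Suc n) * B"])
    show "measure_pmf.expectation ?H (\<lambda>h. (\<Sum>s<n. \<psi> s (fst (h ! s))) + \<psi> n (next_arm \<pi> n h))
        = measure_pmf.expectation ?H (\<lambda>h. measure_pmf.expectation (round_pmf \<theta> \<delta> (next_arm \<pi> n h))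
            (\<lambda>x. \<Sum>s<Suc n. \<psi> s (fst ((h @ [x]) ! s))))"
      using integral_round_pmf_fst[where g="\<lambda>a. c + \<psi> n a" for c]
      by (intro integral_cong_AE) (auto simp: AE_measure_pmf_iff length_hist nth_append)
  qed (intro abs_sum_lessThan_le \<psi>_bounded)
  finally show ?case
    by (simp add: \<psi>_def)
qed

definition delay_cdf :: "nat pmf \<Rightarrow> nat \<Rightarrow> real" where
  "delay_cdf \<delta> m = measure_pmf.prob \<delta> {..m}"

lemma exp_reward_eq:
  assumes arms: "\<And>t as xs. \<pi> t as xs \<in> A" and \<theta>: "\<forall>a\<in>A. 0 \<le> \<theta> a \<and> \<theta> a \<le> 1"
  shows "exp_reward \<pi> \<theta> \<delta> T
       = measure_pmf.expectation (hist \<pi> \<theta> \<delta> T) (\<lambda>h. \<Sum>s<T. \<theta> (fst (h ! s)) * delay_cdf \<delta> (T - Suc s))"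
proof -
  have counted: "measure_pmf.expectation (round_pmf \<theta> \<delta> a) (counted_by T s) = \<theta> a * delay_cdf \<delta> (T - Suc s)"
    if "a \<in> A" for a s
  proof -
    have "(\<lambda>d. if d \<le> T - Suc s then 1 else 0 :: real) = indicator {..T - Suc s}"
      by (auto simp: indicator_def)
    then have "measure_pmf.expectation \<delta> (\<lambda>d. if d \<le> T - Suc s then 1 else 0) = delay_cdf \<delta> (T - Suc s)"
      by (simp add: delay_cdf_def)
    then show ?thesis
      using \<theta> that by (subst integral_round_pmf[where B=1]) (auto simp: counted_by_def)
  qed
  have "exp_reward \<pi> \<theta> \<delta> T = measure_pmf.expectation (hist \<pi> \<theta> \<delta> T)
      (\<lambda>h. \<Sum>s<T. measure_pmf.expectation (round_pmf \<theta> \<delta> (fst (h ! s))) (counted_by T s))"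
    unfolding exp_reward_def cum_reward_eq_sum_counted_by
    by (rule integral_hist_sum_rounds[where B=1]) (simp add: counted_by_def)
  also have "\<dots> = measure_pmf.expectation (hist \<pi> \<theta> \<delta> T)
      (\<lambda>h. \<Sum>s<T. \<theta> (fst (h ! s)) * delay_cdf \<delta> (T - Suc s))"
    using arm_hist[OF arms] counted
    by (intro integral_cong_AE) (auto simp: AE_measure_pmf_iff length_hist intro!: sum.cong)
  finally show ?thesis .
qed

lemma exp_reward_const_policy:
  assumes "0 \<le> \<theta> a" "\<theta> a \<le> 1"
  shows "exp_reward (const_policy a) \<theta> \<delta> T = \<theta> a * (\<Sum>s<T. delay_cdf \<delta> (T - Suc s))"
proof -
  have "exp_reward (const_policy a) \<theta> \<delta> T = measure_pmf.expectation (hist (const_policy a) \<theta> \<delta> T)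
      (\<lambda>h. \<Sum>s<T. \<theta> (fst (h ! s)) * delay_cdf \<delta> (T - Suc s))"
    using assms by (intro exp_reward_eq[where A="{a}"]) (auto simp: const_policy_def)
  also have "\<dots> = measure_pmf.expectation (hist (const_policy a) \<theta> \<delta> T) (\<lambda>h. \<Sum>s<T. \<theta> a * delay_cdf \<delta> (T - Suc s))"
    using arm_hist[of "const_policy a" "{a}"]
    by (intro integral_cong_AE) (auto simp: AE_measure_pmf_iff const_policy_def length_hist intro!: sum.cong)
  finally show ?thesis
    by (simp add: sum_distrib_left)
qed

text \<open>The oracle loses the conversions still in transit at T; in total these are at most E[D].\<close>
lemma sum_delay_tail_le_mean:
  assumes "integrable (measure_pmf \<delta>) (\<lambda>d. real d)"
  shows "(\<Sum>s<T. 1 - delay_cdf \<delta> (T - Suc s)) \<le> measure_pmf.expectation \<delta> (\<lambda>d. real d)"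
proof -
  have "(\<Sum>s<T. 1 - delay_cdf \<delta> (T - Suc s)) = (\<Sum>m<T. measure_pmf.prob \<delta> {m<..})"
    by (subst sum.nat_diff_reindex[symmetric])
       (simp add: delay_cdf_def measure_pmf.prob_compl[symmetric] Compl_eq_Diff_UNIV[symmetric])
  also have "\<dots> = measure_pmf.expectation \<delta> (\<lambda>d. \<Sum>m<T. indicator {m<..} d)"
    by (subst Bochner_Integration.integral_sum)
       (auto intro: integrable_measure_pmf_bounded[where B=1] simp: indicator_def)
  also have "\<dots> \<le> measure_pmf.expectation \<delta> (\<lambda>d. real d)"
  proof (rule integral_mono[OF _ assms])
    show "integrable (measure_pmf \<delta>) (\<lambda>d. \<Sum>m<T. indicator {m<..} d :: real)"
      by (intro Bochner_Integration.integrable_sum integrable_measure_pmf_bounded[where B=1])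
         (simp add: indicator_def)
    have "(\<Sum>m<T. indicator {m<..} d) = real (min T d)" for d
      by (induction T) (auto simp: min_def)
    then show "(\<Sum>m<T. indicator {m<..} d) \<le> real d" for d
      by simp
  qed
  finally show ?thesis .
qed

lemma regret_ge_oracle_minus_reward:
  assumes valid: "valid_policy K \<pi>" and \<theta>: "\<forall>a\<in>{1..K}. 0 \<le> \<theta> a \<and> \<theta> a \<le> 1" and j: "j \<in> {1..K}"
  shows "\<theta> j * (\<Sum>s<T. delay_cdf \<delta> (T - Suc s))
           - measure_pmf.expectation (hist \<pi> \<theta> \<delta> T) (\<lambda>h. \<Sum>s<T. \<theta> (fst (h ! s)) * delay_cdf \<delta> (T - Suc s))
         \<le> regret K \<pi> \<theta> \<delta> T"
proof -
  have "exp_reward (const_policy j) \<theta> \<delta> T \<le> (MAX k\<in>{1..K}. exp_reward (const_policy k) \<theta> \<delta> T)"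
    using j by (intro Max_ge) auto
  moreover have "exp_reward (const_policy j) \<theta> \<delta> T = \<theta> j * (\<Sum>s<T. delay_cdf \<delta> (T - Suc s))"
    using \<theta> j by (intro exp_reward_const_policy) auto
  moreover have "exp_reward \<pi> \<theta> \<delta> T = measure_pmf.expectation (hist \<pi> \<theta> \<delta> T)
      (\<lambda>h. \<Sum>s<T. \<theta> (fst (h ! s)) * delay_cdf \<delta> (T - Suc s))"
    using valid \<theta> by (intro exp_reward_eq[where A="{1..K}"]) (auto simp: valid_policy_def)
  ultimately show ?thesis
    by (simp add: regret_def)
qed

text \<open>Per round, the delays cost the learner at most the probability 1 - \<tau> that the
  conversion is still in transit.\<close>
lemma gap_le_delayed_gap:
  fixes a b \<tau> :: real
  assumes "0 \<le> a" "a \<le> 1" "0 \<le> b" "b \<le> 1" "\<tau> \<le> 1"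
  shows "b - a - (1 - \<tau>) \<le> b * \<tau> - a * \<tau>"
proof -
  have "(b - a) * (1 - \<tau>) \<le> 1 * (1 - \<tau>)"
    using assms by (intro mult_right_mono) auto
  then show ?thesis
    by (simp add: algebra_simps)
qed

lemma regret_ge_gaps:
  assumes valid: "valid_policy K \<pi>" and \<theta>: "\<forall>a\<in>{1..K}. 0 \<le> \<theta> a \<and> \<theta> a \<le> 1" and j: "j \<in> {1..K}"
    and mean: "integrable (measure_pmf \<delta>) (\<lambda>d. real d)"
  shows "measure_pmf.expectation (hist \<pi> \<theta> \<delta> T) (\<lambda>h. \<Sum>x\<leftarrow>h. \<theta> j - \<theta> (fst x))
           - measure_pmf.expectation \<delta> (\<lambda>d. real d) \<le> regret K \<pi> \<theta> \<delta> T"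
proof -
  let ?H = "hist \<pi> \<theta> \<delta> T"
  define \<tau> where "\<tau> s = delay_cdf \<delta> (T - Suc s)" for s
  define reward where "reward h = (\<Sum>s<T. \<theta> (fst (h ! s)) * \<tau> s)" for h :: history
  define gap where "gap h = (\<Sum>x\<leftarrow>h. \<theta> j - \<theta> (fst x))" for h :: history
  have \<tau>: "0 \<le> \<tau> s" "\<tau> s \<le> 1" for s
    by (simp_all add: \<tau>_def delay_cdf_def)
  have \<theta>_j: "0 \<le> \<theta> j" "\<theta> j \<le> 1"
    using \<theta> j by auto
  have arm: "0 \<le> \<theta> (fst (h ! s)) \<and> \<theta> (fst (h ! s)) \<le> 1" if "h \<in> set_pmf ?H" "s < T" for h s
    using that \<theta> arm_hist_valid[OF valid] length_hist by (metis nth_mem)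
  have gap_eq: "gap h = (\<Sum>s<T. \<theta> j - \<theta> (fst (h ! s)))" if "h \<in> set_pmf ?H" for h
    using length_hist[OF that] by (simp add: gap_def sum_list_sum_nth atLeast0LessThan)
  have pointwise: "gap h - (\<Sum>s<T. 1 - \<tau> s) \<le> \<theta> j * (\<Sum>s<T. \<tau> s) - reward h"
    if "h \<in> set_pmf ?H" for h
    unfolding gap_eq[OF that] reward_def sum_distrib_left sum_subtractf[symmetric]
    using arm[OF that] \<theta>_j \<tau> by (intro sum_mono gap_le_delayed_gap) auto
  have gap_bounded: "\<bar>gap h\<bar> \<le> real T" if "h \<in> set_pmf ?H" for h
    unfolding gap_eq[OF that] using arm[OF that] \<theta>_j
    by (intro abs_sum_lessThan_le[where B=1, simplified]) (smt (verit))
  have reward_bounded: "\<bar>reward h\<bar> \<le> real T" if "h \<in> set_pmf ?H" for h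
    unfolding reward_def using arm[OF that] \<tau>
    by (intro abs_sum_lessThan_le[where B=1, simplified]) (auto simp: abs_mult mult_le_one)
  have int_gap: "integrable (measure_pmf ?H) gap"
    using gap_bounded by (rule integrable_measure_pmf_bounded)
  have int_reward: "integrable (measure_pmf ?H) reward"
    using reward_bounded by (rule integrable_measure_pmf_bounded)
  have "measure_pmf.expectation ?H gap - (\<Sum>s<T. 1 - \<tau> s)
      = measure_pmf.expectation ?H (\<lambda>h. gap h - (\<Sum>s<T. 1 - \<tau> s))"
    using int_gap by simp
  also have "\<dots> \<le> measure_pmf.expectation ?H (\<lambda>h. \<theta> j * (\<Sum>s<T. \<tau> s) - reward h)"
  proof (rule integral_mono_AE)
    show "AE h in measure_pmf ?H. gap h - (\<Sum>s<T. 1 - \<tau> s) \<le> \<theta> j * (\<Sum>s<T. \<tau> s) - reward h"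
      using pointwise by (rule AE_pmfI)
  qed (intro Bochner_Integration.integrable_diff int_gap int_reward measure_pmf.integrable_const)+
  also have "\<dots> = \<theta> j * (\<Sum>s<T. \<tau> s) - measure_pmf.expectation ?H reward"
    using int_reward by simp
  also have "\<dots> \<le> regret K \<pi> \<theta> \<delta> T"
    unfolding reward_def \<tau>_def by (rule regret_ge_oracle_minus_reward[OF valid \<theta> j])
  finally show ?thesis
    using sum_delay_tail_le_mean[OF mean, of T] unfolding gap_def[abs_def] \<tau>_def by linarith
qed

lemma pulls_bounds: "0 \<le> pulls k h" "pulls k h \<le> real (length h)"
  by (simp_all add: pulls_def)

lemma integrable_pulls_hist: "integrable (measure_pmf (hist \<pi> \<theta> \<delta> T)) (pulls k)"
proof (rule integrable_measure_pmf_bounded[where B=T])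
  fix h assume "h \<in> set_pmf (hist \<pi> \<theta> \<delta> T)"
  then show "\<bar>pulls k h\<bar> \<le> real T"
    using pulls_bounds[of k h] by (simp add: length_hist)
qed

lemma sum_list_eq_sum_pulls:
  assumes "finite A" and "\<forall>x\<in>set h. fst x \<in> A"
  shows "(\<Sum>x\<leftarrow>h. g (fst x)) = (\<Sum>a\<in>A. g a * pulls a h)"
  using assms
proof (induction h)
  case (Cons x h)
  have "(\<Sum>a\<in>A. g a * pulls a (x # h)) = (\<Sum>a\<in>A. g a * pulls a h + (if fst x = a then g a else 0))"
    by (intro sum.cong) (auto simp: pulls_def algebra_simps)
  then show ?case
    using Cons by (simp add: sum.distrib)
qed (simp add: pulls_def)

lemma regret_ge_pulls:
  assumes valid: "valid_policy K \<pi>" and \<theta>: "\<forall>a\<in>{1..K}. 0 \<le> \<theta> a \<and> \<theta> a \<le> 1" and "1 \<le> K"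
    and mean: "integrable (measure_pmf \<delta>) (\<lambda>d. real d)"
  shows "(\<Sum>k\<in>{1..K} - {1}. (\<theta> 1 - \<theta> k) * measure_pmf.expectation (hist \<pi> \<theta> \<delta> T) (pulls k))
           - measure_pmf.expectation \<delta> (\<lambda>d. real d) \<le> regret K \<pi> \<theta> \<delta> T"
proof -
  let ?H = "hist \<pi> \<theta> \<delta> T"
  have one: "1 \<in> {1..K}"
    using \<open>1 \<le> K\<close> by simp
  have "(\<Sum>x\<leftarrow>h. \<theta> 1 - \<theta> (fst x)) = (\<Sum>k\<in>{1..K} - {1}. (\<theta> 1 - \<theta> k) * pulls k h)"
    if "h \<in> set_pmf ?H" for h
    using sum_list_eq_sum_pulls[of "{1..K}" h "\<lambda>a. \<theta> 1 - \<theta> a"] arm_hist_valid[OF valid that]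
    by (simp add: sum_diff1)
  then have "measure_pmf.expectation ?H (\<lambda>h. \<Sum>x\<leftarrow>h. \<theta> 1 - \<theta> (fst x))
      = measure_pmf.expectation ?H (\<lambda>h. \<Sum>k\<in>{1..K} - {1}. (\<theta> 1 - \<theta> k) * pulls k h)"
    by (intro integral_cong_AE AE_pmfI) simp_all
  also have "\<dots> = (\<Sum>k\<in>{1..K} - {1}. (\<theta> 1 - \<theta> k) * measure_pmf.expectation ?H (pulls k))"
    by (simp add: Bochner_Integration.integral_sum integrable_pulls_hist)
  finally show ?thesis
    using regret_ge_gaps[OF valid \<theta> one mean, of T] by linarith
qed

lemma sum_list_gap_ge_pulls:
  assumes "\<forall>x\<in>set h. fst x \<noteq> k \<longrightarrow> \<theta> (fst x) \<le> m"
  shows "(\<theta> k - m) * (real (length h) - pulls k h) \<le> (\<Sum>x\<leftarrow>h. \<theta> k - \<theta> (fst x))"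
  using assms by (induction h) (auto simp: pulls_def algebra_simps)

lemma regret_ge_pulls_optimal:
  assumes valid: "valid_policy K \<pi>" and \<theta>: "\<forall>a\<in>{1..K}. 0 \<le> \<theta> a \<and> \<theta> a \<le> 1" and k: "k \<in> {1..K}"
    and others: "\<forall>a\<in>{1..K}. a \<noteq> k \<longrightarrow> \<theta> a \<le> m"
    and mean: "integrable (measure_pmf \<delta>) (\<lambda>d. real d)"
  shows "(\<theta> k - m) * (real T - measure_pmf.expectation (hist \<pi> \<theta> \<delta> T) (pulls k))
           - measure_pmf.expectation \<delta> (\<lambda>d. real d) \<le> regret K \<pi> \<theta> \<delta> T"
proof -
  let ?H = "hist \<pi> \<theta> \<delta> T"
  have "(\<theta> k - m) * (real T - measure_pmf.expectation ?H (pulls k))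
      = measure_pmf.expectation ?H (\<lambda>h. (\<theta> k - m) * (real T - pulls k h))"
    by (simp add: integrable_pulls_hist)
  also have "\<dots> \<le> measure_pmf.expectation ?H (\<lambda>h. \<Sum>x\<leftarrow>h. \<theta> k - \<theta> (fst x))"
  proof (rule integral_mono_AE)
    show "integrable (measure_pmf ?H) (\<lambda>h. \<Sum>x\<leftarrow>h. \<theta> k - \<theta> (fst x))"
    proof (rule integrable_measure_pmf_bounded[where B=T])
      fix h assume h: "h \<in> set_pmf ?H"
      have "\<bar>\<theta> k - \<theta> (fst x)\<bar> \<le> 1" if "x \<in> set h" for x
        using \<theta>[rule_format, OF k] \<theta>[rule_format, OF arm_hist_valid[OF valid h that]]
        by (auto simp: abs_le_iff)
      then show "\<bar>\<Sum>x\<leftarrow>h. \<theta> k - \<theta> (fst x)\<bar> \<le> real T"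
        using abs_sum_list_le[of h _ 1] length_hist[OF h] by simp
    qed
    show "AE h in measure_pmf ?H. (\<theta> k - m) * (real T - pulls k h) \<le> (\<Sum>x\<leftarrow>h. \<theta> k - \<theta> (fst x))"
    proof (rule AE_pmfI)
      fix h assume h: "h \<in> set_pmf ?H"
      then have "\<forall>x\<in>set h. fst x \<noteq> k \<longrightarrow> \<theta> (fst x) \<le> m"
        using others arm_hist_valid[OF valid h] by blast
      then show "(\<theta> k - m) * (real T - pulls k h) \<le> (\<Sum>x\<leftarrow>h. \<theta> k - \<theta> (fst x))"
        using sum_list_gap_ge_pulls length_hist[OF h] by metis
    qed
  qed (simp add: integrable_pulls_hist)
  finally show ?thesis
    using regret_ge_gaps[OF valid \<theta> k mean, of T] by linarith
qed

section \<open>Asymptotic lower bound on the number of pulls\<close>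

lemma regret_sublinear:
  assumes "uniformly_efficient K \<delta> \<pi>" and "\<forall>a\<in>{1..K}. 0 \<le> \<theta> a \<and> \<theta> a \<le> 1"
  shows "(\<lambda>T. regret K \<pi> \<theta> \<delta> T / real T) \<longlonglongrightarrow> 0"
proof -
  have "(\<lambda>T. regret K \<pi> \<theta> \<delta> T / real T powr (1/2) * (1 / real T powr (1/2))) \<longlonglongrightarrow> 0 * 0"
    using assms unfolding uniformly_efficient_def
    by (intro tendsto_mult) (auto, real_asymp)
  moreover have "\<forall>\<^sub>F T in sequentially. regret K \<pi> \<theta> \<delta> T / real T powr (1/2) * (1 / real T powr (1/2))
      = regret K \<pi> \<theta> \<delta> T / real T"
    using eventually_gt_at_top[of 0] by eventually_elim (simp flip: powr_add)
  ultimately show ?thesis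
    by (simp only: mult_zero_left Lim_transform_eventually)
qed

lemma prob_few_pulls_ge:
  assumes "0 < T"
  shows "1 - 2 * measure_pmf.expectation (hist \<pi> \<theta> \<delta> T) (pulls k) / real T
           \<le> measure_pmf.prob (hist \<pi> \<theta> \<delta> T) {h. pulls k h \<le> real T / 2}"
proof -
  let ?H = "hist \<pi> \<theta> \<delta> T"
  have "1 - 2 * measure_pmf.expectation ?H (pulls k) / real T
      = measure_pmf.expectation ?H (\<lambda>h. 1 - 2 / real T * pulls k h)"
    by (simp add: integrable_pulls_hist)
  also have "\<dots> \<le> measure_pmf.expectation ?H (indicator {h. pulls k h \<le> real T / 2})"
  proof (rule integral_mono)
    show "1 - 2 / real T * pulls k h \<le> indicator {h. pulls k h \<le> real T / 2} h" for h
      using assms pulls_bounds(1)[of k h] by (auto simp: indicator_def field_simps)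
  qed (auto simp: integrable_pulls_hist intro: integrable_measure_pmf_bounded[where B=1])
  finally show ?thesis
    by simp
qed

lemma prob_few_pulls_le:
  assumes "0 < T"
  shows "measure_pmf.prob (hist \<pi> \<theta> \<delta> T) {h. pulls k h \<le> real T / 2}
           \<le> 2 * (real T - measure_pmf.expectation (hist \<pi> \<theta> \<delta> T) (pulls k)) / real T"
proof -
  let ?H = "hist \<pi> \<theta> \<delta> T"
  have "measure_pmf.prob ?H {h. pulls k h \<le> real T / 2}
      = measure_pmf.expectation ?H (indicator {h. pulls k h \<le> real T / 2})"
    by simp
  also have "\<dots> \<le> measure_pmf.expectation ?H (\<lambda>h. 2 - 2 / real T * pulls k h)"
  proof (rule integral_mono_AE)
    show "AE h in measure_pmf ?H. indicator {h. pulls k h \<le> real T / 2} h \<le> 2 - 2 / real T * pulls k h"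
    proof (rule AE_pmfI)
      fix h assume "h \<in> set_pmf ?H"
      then have "pulls k h \<le> real T"
        using pulls_bounds(2)[of k h] by (simp add: length_hist)
      then show "indicator {h. pulls k h \<le> real T / 2} h \<le> 2 - 2 / real T * pulls k h"
        using assms by (auto simp: indicator_def field_simps)
    qed
  qed (auto simp: integrable_pulls_hist intro: integrable_measure_pmf_bounded[where B=1])
  also have "\<dots> = 2 * (real T - measure_pmf.expectation ?H (pulls k)) / real T"
    using assms by (simp add: integrable_pulls_hist field_simps)
  finally show ?thesis .
qed

lemma pulls_sublinear:
  assumes valid: "valid_policy K \<pi>" and efficient: "uniformly_efficient K \<delta> \<pi>"
    and \<theta>: "\<forall>a\<in>{1..K}. 0 \<le> \<theta> a \<and> \<theta> a \<le> 1" and best: "\<forall>a\<in>{1..K}. \<theta> a \<le> \<theta> 1"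
    and k: "k \<in> {1..K}" "\<theta> k < \<theta> 1" and mean: "integrable (measure_pmf \<delta>) (\<lambda>d. real d)"
  shows "(\<lambda>T. measure_pmf.expectation (hist \<pi> \<theta> \<delta> T) (pulls k) / real T) \<longlonglongrightarrow> 0"
proof (rule Lim_null_comparison)
  define E where "E a T = measure_pmf.expectation (hist \<pi> \<theta> \<delta> T) (pulls a)" for a T
  define \<mu> where "\<mu> = measure_pmf.expectation \<delta> (\<lambda>d. real d)"
  have E_nonneg: "0 \<le> E a T" for a T
    unfolding E_def by (rule integral_nonneg_AE) (simp add: pulls_bounds)
  have "E k T / real T \<le> (regret K \<pi> \<theta> \<delta> T + \<mu>) / real T / (\<theta> 1 - \<theta> k)" for T
  proof -
    have "(\<theta> 1 - \<theta> k) * E k T \<le> (\<Sum>a\<in>{1..K} - {1}. (\<theta> 1 - \<theta> a) * E a T)"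
      using k best E_nonneg by (intro member_le_sum mult_nonneg_nonneg) auto
    then have "(\<theta> 1 - \<theta> k) * E k T \<le> regret K \<pi> \<theta> \<delta> T + \<mu>"
      using regret_ge_pulls[OF valid \<theta> _ mean, of T] k unfolding E_def \<mu>_def by simp
    then have "E k T \<le> (regret K \<pi> \<theta> \<delta> T + \<mu>) / (\<theta> 1 - \<theta> k)"
      using k(2) by (simp add: pos_le_divide_eq mult.commute)
    then have "E k T / real T \<le> (regret K \<pi> \<theta> \<delta> T + \<mu>) / (\<theta> 1 - \<theta> k) / real T"
      by (rule divide_right_mono) simp
    then show ?thesis
      by (metis divide_divide_eq_left mult.commute)
  qed
  then show "\<forall>\<^sub>F T in sequentially. norm (E k T / real T) \<le> (regret K \<pi> \<theta> \<delta> T + \<mu>) / real T / (\<theta> 1 - \<theta> k)"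
    using E_nonneg by simp
  have "(\<lambda>T. regret K \<pi> \<theta> \<delta> T / real T + \<mu> / real T) \<longlonglongrightarrow> 0 + 0"
    by (intro tendsto_add regret_sublinear[OF efficient \<theta>]) real_asymp
  then show "(\<lambda>T. (regret K \<pi> \<theta> \<delta> T + \<mu>) / real T / (\<theta> 1 - \<theta> k)) \<longlonglongrightarrow> 0"
    by (intro tendsto_divide_zero) (simp add: add_divide_distrib)
qed

lemma eventually_prob_few_pulls_ge:
  assumes valid: "valid_policy K \<pi>" and efficient: "uniformly_efficient K \<delta> \<pi>"
    and \<theta>: "\<forall>a\<in>{1..K}. 0 \<le> \<theta> a \<and> \<theta> a \<le> 1" and best: "\<forall>a\<in>{1..K}. \<theta> a \<le> \<theta> 1"
    and k: "k \<in> {1..K}" "\<theta> k < \<theta> 1" and mean: "integrable (measure_pmf \<delta>) (\<lambda>d. real d)"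
    and "0 < \<epsilon>"
  shows "\<forall>\<^sub>F T in sequentially. 1 - \<epsilon> \<le> measure_pmf.prob (hist \<pi> \<theta> \<delta> T) {h. pulls k h \<le> real T / 2}"
proof -
  have "\<forall>\<^sub>F T in sequentially. measure_pmf.expectation (hist \<pi> \<theta> \<delta> T) (pulls k) / real T < \<epsilon> / 2"
    using pulls_sublinear[OF assms(1-7)] \<open>0 < \<epsilon>\<close> by (intro order_tendstoD) auto
  then show ?thesis
    using eventually_gt_at_top[of 0]
  proof eventually_elim
    case (elim T)
    have "1 - 2 * (measure_pmf.expectation (hist \<pi> \<theta> \<delta> T) (pulls k) / real T)
        \<le> measure_pmf.prob (hist \<pi> \<theta> \<delta> T) {h. pulls k h \<le> real T / 2}"
      using prob_few_pulls_ge[of T \<pi> \<theta> \<delta> k] elim by simp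
    then show ?case
      using elim by linarith
  qed
qed

lemma eventually_prob_few_pulls_le:
  assumes valid: "valid_policy K \<pi>" and efficient: "uniformly_efficient K \<delta> \<pi>"
    and \<theta>: "\<forall>a\<in>{1..K}. 0 \<le> \<theta> a \<and> \<theta> a \<le> 1" and k: "k \<in> {1..K}"
    and others: "\<forall>a\<in>{1..K}. a \<noteq> k \<longrightarrow> \<theta> a \<le> m" and "m < \<theta> k"
    and mean: "integrable (measure_pmf \<delta>) (\<lambda>d. real d)" and \<alpha>: "0 < \<alpha>" "\<alpha> < 1"
  shows "\<forall>\<^sub>F T in sequentially. measure_pmf.prob (hist \<pi> \<theta> \<delta> T) {h. pulls k h \<le> real T / 2} \<le> real T powr (\<alpha> - 1)"
proof -
  define \<mu> where "\<mu> = measure_pmf.expectation \<delta> (\<lambda>d. real d)"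
  define R where "R T = regret K \<pi> \<theta> \<delta> T + \<mu>" for T
  have "(\<lambda>T. regret K \<pi> \<theta> \<delta> T / real T powr \<alpha> + \<mu> / real T powr \<alpha>) \<longlonglongrightarrow> 0 + 0"
    using efficient \<theta> \<alpha> unfolding uniformly_efficient_def by (intro tendsto_add) (auto, real_asymp)
  then have "(\<lambda>T. R T / real T powr \<alpha>) \<longlonglongrightarrow> 0"
    by (simp add: R_def add_divide_distrib)
  then have "\<forall>\<^sub>F T in sequentially. R T / real T powr \<alpha> < (\<theta> k - m) / 2"
    using \<open>m < \<theta> k\<close> by (intro order_tendstoD) auto
  then show ?thesis
    using eventually_gt_at_top[of 0]
  proof eventually_elim
    case (elim T)
    have "(\<theta> k - m) * (real T - measure_pmf.expectation (hist \<pi> \<theta> \<delta> T) (pulls k)) \<le> R T"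
      using regret_ge_pulls_optimal[OF valid \<theta> k others mean, of T] by (simp add: R_def \<mu>_def)
    then have "2 * (real T - measure_pmf.expectation (hist \<pi> \<theta> \<delta> T) (pulls k)) / real T
        \<le> 2 * (R T / (\<theta> k - m)) / real T"
      using \<open>m < \<theta> k\<close> by (intro divide_right_mono mult_left_mono) (auto simp: pos_le_divide_eq mult.commute)
    also have "\<dots> \<le> real T powr \<alpha> / real T"
      using elim \<open>m < \<theta> k\<close> by (intro divide_right_mono) (auto simp: field_simps)
    also have "\<dots> = real T powr (\<alpha> - 1)"
      using elim by (simp add: powr_diff)
    finally show ?case
      using prob_few_pulls_le[of T \<pi> \<theta> \<delta> k] elim by simp
  qed
qed

lemma eventually_kl_pulls_ge:
  assumes valid: "valid_policy K \<pi>" and efficient: "uniformly_efficient K \<delta> \<pi>"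
    and \<theta>: "\<forall>a\<in>{1..K}. 0 < \<theta> a \<and> \<theta> a < 1" and best: "\<forall>a\<in>{1..K}. \<theta> a \<le> \<theta> 1"
    and k: "k \<in> {1..K}" "\<theta> k < \<theta> 1" and x: "\<theta> 1 < x" "x < 1"
    and mean: "integrable (measure_pmf \<delta>) (\<lambda>d. real d)" and \<alpha>: "0 < \<alpha>" "\<alpha> < 1"
  shows "\<forall>\<^sub>F T in sequentially. (1 - \<alpha>) * (1 - \<alpha>) * ln (real T) - ln 2
           \<le> kl_bern (\<theta> k) x * measure_pmf.expectation (hist \<pi> \<theta> \<delta> T) (pulls k)"
proof -
  define \<theta>' where "\<theta>' = \<theta>(k := x)"
  have "0 < \<theta> 1"
    using \<theta> k(1) by auto
  then have \<theta>': "\<forall>a\<in>{1..K}. 0 < \<theta>' a \<and> \<theta>' a < 1"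
    using \<theta> x by (auto simp: \<theta>'_def)
  have closed: "\<forall>a\<in>{1..K}. 0 \<le> \<rho> a \<and> \<rho> a \<le> 1" if "\<forall>a\<in>{1..K}. 0 < \<rho> a \<and> \<rho> a < 1" for \<rho> :: "nat \<Rightarrow> real"
  proof
    fix a assume "a \<in> {1..K}"
    then show "0 \<le> \<rho> a \<and> \<rho> a \<le> 1"
      using that[rule_format, of a] by simp
  qed
  have "\<forall>\<^sub>F T in sequentially. 1 - \<alpha> \<le> measure_pmf.prob (hist \<pi> \<theta> \<delta> T) {h. pulls k h \<le> real T / 2}"
    using \<alpha> by (intro eventually_prob_few_pulls_ge[OF valid efficient closed[OF \<theta>] best k mean])
  moreover have "\<forall>\<^sub>F T in sequentially.
      measure_pmf.prob (hist \<pi> \<theta>' \<delta> T) {h. pulls k h \<le> real T / 2} \<le> real T powr (\<alpha> - 1)"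
    using best x k(1) \<alpha>
    by (intro eventually_prob_few_pulls_le[OF valid efficient closed[OF \<theta>'] k(1), where m="\<theta> 1"] mean)
       (auto simp: \<theta>'_def)
  ultimately show ?thesis
    using eventually_gt_at_top[of 0]
  proof eventually_elim
    case (elim T)
    define P where "P = measure_pmf.prob (hist \<pi> \<theta> \<delta> T) {h. pulls k h \<le> real T / 2}"
    have ln_T: "ln (1 / real T powr (\<alpha> - 1)) = (1 - \<alpha>) * ln (real T)"
      using elim by (simp add: ln_div ln_powr algebra_simps)
    have "(1 - \<alpha>) * (1 - \<alpha>) * ln (real T) \<le> P * ((1 - \<alpha>) * ln (real T))"
      using elim \<alpha> by (subst mult.assoc, intro mult_right_mono) (auto simp: P_def)
    moreover have "P * ((1 - \<alpha>) * ln (real T)) - ln 2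
        \<le> measure_pmf.expectation (hist \<pi> \<theta> \<delta> T) (kl_cost \<theta> \<theta>')"
      unfolding P_def ln_T[symmetric] using elim
      by (intro prob_change_of_measure[OF valid \<theta> \<theta>']) auto
    moreover have "measure_pmf.expectation (hist \<pi> \<theta> \<delta> T) (kl_cost \<theta> \<theta>')
        = kl_bern (\<theta> k) x * measure_pmf.expectation (hist \<pi> \<theta> \<delta> T) (pulls k)"
      by (simp add: \<theta>'_def kl_cost_fun_upd[abs_def])
    ultimately show ?case
      by linarith
  qed
qed

lemma exists_above_kl_bern_less:
  assumes p: "0 < p" "p < 1" and q: "0 < q" "q < 1" and less: "c * kl_bern p q < 1"
  shows "\<exists>x. q < x \<and> x < 1 \<and> c * kl_bern p x < 1"
proof -
  have "((\<lambda>y. c * kl_bern p y) \<longlongrightarrow> c * kl_bern p q) (at q)"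
    using isCont_kl_bern[OF p q] by (intro tendsto_mult_left) (simp add: isCont_def)
  then have "\<forall>\<^sub>F y in at q. c * kl_bern p y < 1"
    using less by (rule order_tendstoD)
  then obtain d where "0 < d" and d: "\<And>y. y \<noteq> q \<Longrightarrow> dist y q < d \<Longrightarrow> c * kl_bern p y < 1"
    unfolding eventually_at by auto
  define w where "w = min d (1 - q)"
  have "0 < w" "w \<le> d" "w \<le> 1 - q"
    using \<open>0 < d\<close> q by (auto simp: w_def)
  then have "q < q + w / 2" "q + w / 2 < 1" "c * kl_bern p (q + w / 2) < 1"
    by (auto intro!: d simp: dist_real_def)
  then show ?thesis
    by blast
qed

lemma eventually_pulls_ge:
  assumes valid: "valid_policy K \<pi>" and efficient: "uniformly_efficient K \<delta> \<pi>"
    and \<theta>: "\<forall>a\<in>{1..K}. 0 < \<theta> a \<and> \<theta> a < 1" and best: "\<forall>a\<in>{1..K}. \<theta> a \<le> \<theta> 1"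
    and k: "k \<in> {1..K}" "\<theta> k < \<theta> 1" and mean: "integrable (measure_pmf \<delta>) (\<lambda>d. real d)"
    and c: "c < 1 / kl_bern (\<theta> k) (\<theta> 1)"
  shows "\<forall>\<^sub>F T in sequentially. c * ln (real T) \<le> measure_pmf.expectation (hist \<pi> \<theta> \<delta> T) (pulls k)"
proof (cases "c \<le> 0")
  case True
  show ?thesis
    using eventually_ge_at_top[of 1]
  proof eventually_elim
    case (elim T)
    have "c * ln (real T) \<le> 0"
      using True elim by (simp add: mult_nonpos_nonneg)
    also have "0 \<le> measure_pmf.expectation (hist \<pi> \<theta> \<delta> T) (pulls k)"
      by (rule integral_nonneg_AE) (simp add: pulls_bounds)
    finally show ?case .
  qed
next
  case False
  have \<theta>_k: "0 < \<theta> k" "\<theta> k < 1" and \<theta>_1: "0 < \<theta> 1" "\<theta> 1 < 1"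
    using \<theta> k(1) by auto
  have "c * kl_bern (\<theta> k) (\<theta> 1) < 1"
    using c kl_bern_pos[OF \<theta>_k \<theta>_1] k(2) by (simp add: field_simps)
  then obtain x where x: "\<theta> 1 < x" "x < 1" and "c * kl_bern (\<theta> k) x < 1"
    using exists_above_kl_bern_less[OF \<theta>_k \<theta>_1] by blast
  define r where "r = c * kl_bern (\<theta> k) x"
  have kl_x: "0 < kl_bern (\<theta> k) x"
    using \<theta>_k x k(2) by (intro kl_bern_pos) auto
  have r: "0 < r" "r < 1"
    using False kl_x \<open>c * kl_bern (\<theta> k) x < 1\<close> by (auto simp: r_def)
  define \<alpha> where "\<alpha> = (1 - r) / 2"
  have \<alpha>: "0 < \<alpha>" "\<alpha> < 1"
    using r by (auto simp: \<alpha>_def)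
  have "(1 - \<alpha>) * (1 - \<alpha>) - r = \<alpha> * \<alpha>"
    unfolding \<alpha>_def by (simp add: field_simps)
  then have margin: "0 < (1 - \<alpha>) * (1 - \<alpha>) - r"
    using \<alpha> by simp
  have "filterlim (\<lambda>T. ln (real T)) at_top sequentially"
    by real_asymp
  then have "\<forall>\<^sub>F T in sequentially. ln 2 / ((1 - \<alpha>) * (1 - \<alpha>) - r) \<le> ln (real T)"
    by (simp add: filterlim_at_top)
  moreover have "\<forall>\<^sub>F T in sequentially. (1 - \<alpha>) * (1 - \<alpha>) * ln (real T) - ln 2
      \<le> kl_bern (\<theta> k) x * measure_pmf.expectation (hist \<pi> \<theta> \<delta> T) (pulls k)"
    by (rule eventually_kl_pulls_ge[OF valid efficient \<theta> best k x mean \<alpha>])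
  ultimately show ?thesis
  proof eventually_elim
    case (elim T)
    then have "r * ln (real T) \<le> kl_bern (\<theta> k) x * measure_pmf.expectation (hist \<pi> \<theta> \<delta> T) (pulls k)"
      using margin by (simp add: pos_divide_le_eq algebra_simps)
    then have "kl_bern (\<theta> k) x * (c * ln (real T))
        \<le> kl_bern (\<theta> k) x * measure_pmf.expectation (hist \<pi> \<theta> \<delta> T) (pulls k)"
      by (simp add: r_def algebra_simps)
    then show ?case
      using kl_x by simp
  qed
qed

lemma eventually_gap_weighted_pulls_ge:
  assumes valid: "valid_policy K \<pi>" and efficient: "uniformly_efficient K \<delta> \<pi>"
    and \<theta>: "\<forall>k\<in>{1..K}. 0 < \<theta> k \<and> \<theta> k < 1" and optimal: "\<forall>k\<in>{1..K}. k \<noteq> 1 \<longrightarrow> \<theta> k < \<theta> 1"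
    and mean: "integrable (measure_pmf \<delta>) (\<lambda>d. real d)" and "0 < \<eta>"
  shows "\<forall>\<^sub>F T in sequentially.
           ((\<Sum>k\<in>{1..K} - {1}. (\<theta> 1 - \<theta> k) / kl_bern (\<theta> k) (\<theta> 1)) - \<eta> * (\<Sum>k\<in>{1..K} - {1}. \<theta> 1 - \<theta> k))
             * ln (real T)
           \<le> (\<Sum>k\<in>{1..K} - {1}. (\<theta> 1 - \<theta> k) * measure_pmf.expectation (hist \<pi> \<theta> \<delta> T) (pulls k))"
proof -
  have best: "\<forall>a\<in>{1..K}. \<theta> a \<le> \<theta> 1"
  proof
    fix a assume "a \<in> {1..K}"
    then show "\<theta> a \<le> \<theta> 1"
      using optimal by (cases "a = 1") auto
  qed
  have "\<forall>k\<in>{1..K} - {1}. \<forall>\<^sub>F T in sequentially.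
      (1 / kl_bern (\<theta> k) (\<theta> 1) - \<eta>) * ln (real T) \<le> measure_pmf.expectation (hist \<pi> \<theta> \<delta> T) (pulls k)"
  proof
    fix k assume "k \<in> {1..K} - {1}"
    then show "\<forall>\<^sub>F T in sequentially.
        (1 / kl_bern (\<theta> k) (\<theta> 1) - \<eta>) * ln (real T) \<le> measure_pmf.expectation (hist \<pi> \<theta> \<delta> T) (pulls k)"
      using optimal \<open>0 < \<eta>\<close> by (intro eventually_pulls_ge[OF valid efficient \<theta> best _ _ mean]) auto
  qed
  then have "\<forall>\<^sub>F T in sequentially. \<forall>k\<in>{1..K} - {1}.
      (1 / kl_bern (\<theta> k) (\<theta> 1) - \<eta>) * ln (real T) \<le> measure_pmf.expectation (hist \<pi> \<theta> \<delta> T) (pulls k)"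
    by (intro eventually_ball_finite) auto
  then show ?thesis
  proof eventually_elim
    case (elim T)
    have "((\<Sum>k\<in>{1..K} - {1}. (\<theta> 1 - \<theta> k) / kl_bern (\<theta> k) (\<theta> 1)) - \<eta> * (\<Sum>k\<in>{1..K} - {1}. \<theta> 1 - \<theta> k))
          * ln (real T)
        = (\<Sum>k\<in>{1..K} - {1}. (\<theta> 1 - \<theta> k) * ((1 / kl_bern (\<theta> k) (\<theta> 1) - \<eta>) * ln (real T)))"
      unfolding left_diff_distrib sum_distrib_left sum_distrib_right sum_subtractf[symmetric]
      by (intro sum.cong) (simp_all add: algebra_simps diff_divide_distrib)
    also have "\<dots> \<le> (\<Sum>k\<in>{1..K} - {1}. (\<theta> 1 - \<theta> k) * measure_pmf.expectation (hist \<pi> \<theta> \<delta> T) (pulls k))"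
      using elim best by (intro sum_mono mult_left_mono) auto
    finally show ?case .
  qed
qed

lemma eventually_regret_div_ln_ge:
  assumes "1 \<le> K"
    and \<theta>: "\<forall>k\<in>{1..K}. 0 < \<theta> k \<and> \<theta> k < 1"
    and optimal: "\<forall>k\<in>{1..K}. k \<noteq> 1 \<longrightarrow> \<theta> k < \<theta> 1"
    and mean: "integrable (measure_pmf \<delta>) (\<lambda>d. real d)"
    and valid: "valid_policy K \<pi>" and efficient: "uniformly_efficient K \<delta> \<pi>"
    and "0 < e"
  shows "\<forall>\<^sub>F T in sequentially. (\<Sum>k\<in>{1..K} - {1}. (\<theta> 1 - \<theta> k) / kl_bern (\<theta> k) (\<theta> 1)) - e
           \<le> regret K \<pi> \<theta> \<delta> T / ln (real T)"
proof -
  define S where "S = (\<Sum>k\<in>{1..K} - {1}. (\<theta> 1 - \<theta> k) / kl_bern (\<theta> k) (\<theta> 1))"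
  define G where "G = (\<Sum>k\<in>{1..K} - {1}. \<theta> 1 - \<theta> k)"
  define \<eta> where "\<eta> = e / (2 * (G + 1))"
  define \<mu> where "\<mu> = measure_pmf.expectation \<delta> (\<lambda>d. real d)"
  have closed: "\<forall>a\<in>{1..K}. 0 \<le> \<theta> a \<and> \<theta> a \<le> 1"
    using \<theta> by (simp add: less_imp_le)
  have G: "0 \<le> G"
    unfolding G_def using optimal by (intro sum_nonneg) (auto simp: less_imp_le)
  have "0 < \<eta>"
    using G \<open>0 < e\<close> unfolding \<eta>_def by (intro divide_pos_pos) auto
  moreover have "\<eta> * (G + 1) = e / 2"
    using G unfolding \<eta>_def by (simp add: field_simps)
  ultimately have \<eta>_G: "\<eta> * G \<le> e / 2"
    by (auto intro: order_trans[OF mult_left_mono[of G "G + 1"]])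
  have "(\<lambda>T. \<mu> / ln (real T)) \<longlonglongrightarrow> 0"
    by real_asymp
  then have "\<forall>\<^sub>F T in sequentially. \<mu> / ln (real T) < e / 2"
    using \<open>0 < e\<close> by (intro order_tendstoD) auto
  moreover have "\<forall>\<^sub>F T in sequentially. (S - \<eta> * G) * ln (real T)
      \<le> (\<Sum>k\<in>{1..K} - {1}. (\<theta> 1 - \<theta> k) * measure_pmf.expectation (hist \<pi> \<theta> \<delta> T) (pulls k))"
    unfolding S_def G_def by (rule eventually_gap_weighted_pulls_ge[OF valid efficient \<theta> optimal mean \<open>0 < \<eta>\<close>])
  ultimately show ?thesis
    using eventually_ge_at_top[of 2]
  proof eventually_elim
    case (elim T)
    have "(S - \<eta> * G) * ln (real T) \<le> regret K \<pi> \<theta> \<delta> T + \<mu>"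
      using elim regret_ge_pulls[OF valid closed \<open>1 \<le> K\<close> mean, of T] by (simp add: \<mu>_def)
    then have "S - \<eta> * G \<le> regret K \<pi> \<theta> \<delta> T / ln (real T) + \<mu> / ln (real T)"
      using elim by (simp add: pos_le_divide_eq flip: add_divide_distrib)
    then show ?case
      using elim \<eta>_G unfolding S_def by linarith
  qed
qed

theorem theorem4:
  fixes K :: nat and \<theta> :: "nat \<Rightarrow> real" and \<delta> :: "nat pmf" and \<pi> :: policy
  assumes "1 \<le> K"
    and "\<forall>k\<in>{1..K}. 0 < \<theta> k \<and> \<theta> k < 1"
    and "\<forall>k\<in>{1..K}. k \<noteq> 1 \<longrightarrow> \<theta> k < \<theta> 1"
    and "integrable (measure_pmf \<delta>) (\<lambda>d. real d)"
    and "valid_policy K \<pi>"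
    and "uniformly_efficient K \<delta> \<pi>"
  shows "ereal (\<Sum>k\<in>{1..K} - {1}. (\<theta> 1 - \<theta> k) / kl_bern (\<theta> k) (\<theta> 1))
           \<le> liminf (\<lambda>T. ereal (regret K \<pi> \<theta> \<delta> T / ln (real T)))"
  unfolding le_Liminf_iff
proof (intro allI impI)
  fix y assume "y < ereal (\<Sum>k\<in>{1..K} - {1}. (\<theta> 1 - \<theta> k) / kl_bern (\<theta> k) (\<theta> 1))"
  then obtain r where r: "y < ereal r" "r < (\<Sum>k\<in>{1..K} - {1}. (\<theta> 1 - \<theta> k) / kl_bern (\<theta> k) (\<theta> 1))"
    using ereal_dense2 by fastforce
  have "\<forall>\<^sub>F T in sequentially. (\<Sum>k\<in>{1..K} - {1}. (\<theta> 1 - \<theta> k) / kl_bern (\<theta> k) (\<theta> 1))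
      - ((\<Sum>k\<in>{1..K} - {1}. (\<theta> 1 - \<theta> k) / kl_bern (\<theta> k) (\<theta> 1)) - r) \<le> regret K \<pi> \<theta> \<delta> T / ln (real T)"
    using r(2) by (intro eventually_regret_div_ln_ge[OF assms]) simp
  then show "\<forall>\<^sub>F T in sequentially. y < ereal (regret K \<pi> \<theta> \<delta> T / ln (real T))"
    by eventually_elim (use r(1) in \<open>auto intro: less_le_trans\<close>)
qed

end
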